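(* Let $(S,\curlyvee)$ be a $\curlyvee$-algebra and $a,b,c,d,i\in S$. If $d\lesssim a\sqcup i$, $d\lesssim b\sqcup i$, $d\lesssim c\sqcup i$, $d\lesssim(a\curlyvee b)\sqcup i$ and $d\lesssim(b\curlyvee c)\sqcup i$, then $d\lesssim(a\curlyvee c)\sqcup i$.
   Context: A $\curlyvee$-algebra is an algebra $(S,\curlyvee)$ with one binary operation such that, defining $a\sqcup b=a\curlyvee(a\curlyvee b)$ and $a\lesssim b$ iff $b\sqcup a=b$: $\sqcup$ is associative, $a\sqcup a=a$ and $a\sqcup b=(a\sqcup b)\sqcup a$ (so $(S,\sqcup)$ is a left regular band); $\curlyvee$ is commutative and idempotent; $(a\curlyvee b)\sqcup(a\sqcup b)=a\sqcup b$; $a\sqcup(b\curlyvee c)=(a\sqcup b)\curlyvee(a\sqcup c)$; and for all $a,b,c,d$, if $d\lesssim a$, $d\lesssim b$, $d\lesssim c$, $d\lesssim a\curlyvee b$, $d\lesssim b\curlyvee c$ then $d\lesssim a\curlyvee c$. *)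

theory Defs
  imports Main
begin

definition vsq :: "('a \<Rightarrow> 'a \<Rightarrow> 'a) \<Rightarrow> 'a \<Rightarrow> 'a \<Rightarrow> 'a" where
  "vsq v a b = v a (v a b)"

definition vle :: "('a \<Rightarrow> 'a \<Rightarrow> 'a) \<Rightarrow> 'a \<Rightarrow> 'a \<Rightarrow> bool" where
  "vle v a b \<longleftrightarrow> vsq v b a = b"

definition curlyvee_algebra :: "('a \<Rightarrow> 'a \<Rightarrow> 'a) \<Rightarrow> bool" where
  "curlyvee_algebra v \<longleftrightarrow>
     (\<forall>a b c. vsq v (vsq v a b) c = vsq v a (vsq v b c)) \<and>
     (\<forall>a. vsq v a a = a) \<and>
     (\<forall>a b. vsq v a b = vsq v (vsq v a b) a) \<and>
     (\<forall>a b. v a b = v b a) \<and>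
     (\<forall>a. v a a = a) \<and>
     (\<forall>a b. vsq v (v a b) (vsq v a b) = vsq v a b) \<and>
     (\<forall>a b c. vsq v a (v b c) = v (vsq v a b) (vsq v a c)) \<and>
     (\<forall>a b c d. vle v d a \<and> vle v d b \<and> vle v d c \<and> vle v d (v a b) \<and> vle v d (v b c)
        \<longrightarrow> vle v d (v a c))"

end

theory Submission
  imports Defs
begin

text \<open>In the left regular band \<open>(S, \<squnion>)\<close> the elements \<open>x \<squnion> i\<close> and \<open>i \<squnion> x\<close>
  absorb each other, so they have the same elements below them. This lets us move \<open>i\<close>
  to the left, where it distributes over \<open>\<curlyvee>\<close>, and then apply the last axiom to
  \<open>i \<squnion> a\<close>, \<open>i \<squnion> b\<close>, \<open>i \<squnion> c\<close>.\<close>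

lemma curlyvee_algebraD:
  assumes "curlyvee_algebra v"
  shows vsq_assoc: "vsq v (vsq v a b) c = vsq v a (vsq v b c)"
    and vsq_idem: "vsq v a a = a"
    and vsq_left_regular: "vsq v (vsq v a b) a = vsq v a b"
    and vsq_v_distrib: "vsq v a (v b c) = v (vsq v a b) (vsq v a c)"
    and vle_v_trans: "\<lbrakk>vle v d a; vle v d b; vle v d c; vle v d (v a b); vle v d (v b c)\<rbrakk>
      \<Longrightarrow> vle v d (v a c)"
  using assms unfolding curlyvee_algebra_def by metis+

lemma vsq_absorb_swap:
  assumes assoc: "\<And>a b c. vsq v (vsq v a b) c = vsq v a (vsq v b c)"
    and idem: "\<And>a. vsq v a a = a"
    and left_regular: "\<And>a b. vsq v (vsq v a b) a = vsq v a b"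
  shows "vsq v (vsq v i x) (vsq v x i) = vsq v i x"
proof -
  have "vsq v (vsq v i x) (vsq v x i) = vsq v i (vsq v (vsq v x x) i)"
    by (simp add: assoc)
  also have "\<dots> = vsq v (vsq v i x) i"
    by (simp add: assoc idem)
  also have "\<dots> = vsq v i x"
    by (rule left_regular)
  finally show ?thesis .
qed

lemma vle_vsq_swap:
  assumes assoc: "\<And>a b c. vsq v (vsq v a b) c = vsq v a (vsq v b c)"
    and idem: "\<And>a. vsq v a a = a"
    and left_regular: "\<And>a b. vsq v (vsq v a b) a = vsq v a b"
  shows "vle v d (vsq v x i) \<longleftrightarrow> vle v d (vsq v i x)"
proof -
  have swap: "vle v d (vsq v i x)" if "vle v d (vsq v x i)" for x i
  proof -
    have "vsq v (vsq v i x) d = vsq v (vsq v (vsq v i x) (vsq v x i)) d"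
      using vsq_absorb_swap[OF assoc idem left_regular] by simp
    also have "\<dots> = vsq v (vsq v i x) (vsq v (vsq v x i) d)"
      by (rule assoc)
    also have "\<dots> = vsq v i x"
      using that vsq_absorb_swap[OF assoc idem left_regular] by (simp add: vle_def)
    finally show ?thesis by (simp add: vle_def)
  qed
  show ?thesis using swap by blast
qed

theorem lemma4p4:
  fixes v :: "'a \<Rightarrow> 'a \<Rightarrow> 'a" and a b c d i :: 'a
  assumes "curlyvee_algebra v"
    and "vle v d (vsq v a i)" and "vle v d (vsq v b i)" and "vle v d (vsq v c i)"
    and "vle v d (vsq v (v a b) i)" and "vle v d (vsq v (v b c) i)"
  shows "vle v d (vsq v (v a c) i)"
proof -
  note swap = vle_vsq_swap[OF vsq_assoc[OF assms(1)] vsq_idem[OF assms(1)]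
      vsq_left_regular[OF assms(1)]]
  note distrib = vsq_v_distrib[OF assms(1)]
  have "vle v d (vsq v i a)" "vle v d (vsq v i b)" "vle v d (vsq v i c)"
    "vle v d (v (vsq v i a) (vsq v i b))" "vle v d (v (vsq v i b) (vsq v i c))"
    using assms(2-6) by (simp_all add: swap flip: distrib)
  then have "vle v d (v (vsq v i a) (vsq v i c))"
    by (rule vle_v_trans[OF assms(1)])
  then show ?thesis
    by (simp add: swap flip: distrib)
qed

end
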